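(* For every $n$, the map of $n$-globular sets $\pi\colon D^s_n\to\mathrm{pd}_n$ is surjective: for every $k\le n$ and every globular $k$-pasting diagram $P$ there is a simple $k$-string diagram $D$ with $\pi(D)=P$.
   Context: Write $\langle\ell\rangle=\{1<\dots<\ell\}$. A $k$-stage level tree with crossings is a diagram $X_k\xrightarrow{v^k}\cdots\xrightarrow{v^2}X_1\xrightarrow{v^1}\langle1\rangle$ of finite totally ordered sets and arbitrary functions; it is a $k$-stage level tree if all $v^i$ are order preserving. A simple $k$-string diagram is a $k$-stage level tree with crossings with $X_i=\langle\ell_i\rangle$ for all $i$; a globular $k$-pasting diagram is a $k$-stage level tree with $X_i=\langle\ell_i\rangle$. $D^s_n(k)$ and $\mathrm{pd}_n(k)$ ($k\le n$) denote the sets of these, made into $n$-globular sets with source and target both given by truncation. For a $k$-stage level tree with crossings $X$, define $\overline{X}$ as the same diagram of sets with new orders: $\overline{X}_1=X_1$, and $\overline{X}_{i+1}$ has the unique total order making $v^{i+1}\times\mathrm{id}\colon\overline{X}_{i+1}\to\overline{X}_i\times X_{i+1}$ order preserving, where the target has the lexicographic order ($(a,b)\le(a',b')$ iff $a<a'$, or $a=a'$ and $b\le b'$). Then $\overline{X}$ is a $k$-stage level tree. For a simple $k$-string diagram $D$, $\pi(D)$ is the unique globular $k$-pasting diagram isomorphic (via levelwise order-preserving bijections commuting with the maps) to $\overline{D}$. *)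

theory Defs
  imports Main
begin

text \<open>A k-stage diagram with levels X_i = <l_i> = {1..l_i} (i = 1..k) and
  X_0 = <1> is a list ds of length k; ds!(i-1) is the list [v^i(1), ..., v^i(l_i)],
  so l_i = length (ds!(i-1)). Level j (0-indexed) of the list is level j+1 of the diagram.\<close>

definition level_size :: "nat list list \<Rightarrow> nat \<Rightarrow> nat" where
  "level_size ds j = length (ds ! j)"

definition cod_size :: "nat list list \<Rightarrow> nat \<Rightarrow> nat" where
  "cod_size ds j = (if j = 0 then 1 else length (ds ! (j - 1)))"

text \<open>The map v^(j+1) : X_(j+1) \<rightarrow> X_j as a function on {1..l_(j+1)}.\<close>
definition vmap :: "nat list list \<Rightarrow> nat \<Rightarrow> nat \<Rightarrow> nat" where
  "vmap ds j x = ds ! j ! (x - 1)"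

definition simple_string_diagram :: "nat \<Rightarrow> nat list list \<Rightarrow> bool" where
  "simple_string_diagram k ds \<longleftrightarrow> length ds = k \<and>
     (\<forall>j<k. set (ds ! j) \<subseteq> {1..cod_size ds j})"

definition pasting_diagram :: "nat \<Rightarrow> nat list list \<Rightarrow> bool" where
  "pasting_diagram k ds \<longleftrightarrow> simple_string_diagram k ds \<and> (\<forall>j<k. sorted (ds ! j))"

text \<open>The order of \<open>overline X\<close> at list position j: the usual order at level 1, and at the
  next level the order pulled back along v \<times> id from the lexicographic order on
  overline X_i \<times> X_(i+1).\<close>
fun ovl_le :: "nat list list \<Rightarrow> nat \<Rightarrow> nat \<Rightarrow> nat \<Rightarrow> bool" where
  "ovl_le ds 0 x y = (x \<le> y)"
| "ovl_le ds (Suc j) x y =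
     ((ovl_le ds j (vmap ds (Suc j) x) (vmap ds (Suc j) y) \<and> vmap ds (Suc j) x \<noteq> vmap ds (Suc j) y)
      \<or> (vmap ds (Suc j) x = vmap ds (Suc j) y \<and> x \<le> y))"

text \<open>f is an isomorphism from overline ds to P: levelwise order-preserving bijections
  (f j on level j+1; on X_0 = <1> the identity) commuting with the maps.\<close>
definition ovl_iso :: "nat list list \<Rightarrow> nat list list \<Rightarrow> (nat \<Rightarrow> nat \<Rightarrow> nat) \<Rightarrow> bool" where
  "ovl_iso ds P f \<longleftrightarrow> length P = length ds \<and>
     (\<forall>j<length ds. level_size P j = level_size ds j \<and>
        bij_betw (f j) {1..level_size ds j} {1..level_size P j} \<and>
        (\<forall>x\<in>{1..level_size ds j}. \<forall>y\<in>{1..level_size ds j}.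
            ovl_le ds j x y \<longleftrightarrow> f j x \<le> f j y) \<and>
        (\<forall>x\<in>{1..level_size ds j}.
            vmap P j (f j x) = (if j = 0 then vmap ds j x else f (j - 1) (vmap ds j x))))"

definition pi_sd :: "nat list list \<Rightarrow> nat list list" where
  "pi_sd ds = (THE P. pasting_diagram (length ds) P \<and> (\<exists>f. ovl_iso ds P f))"

end

theory Submission
  imports Defs
begin

text \<open>The witness is \<open>P\<close> itself. When every map is order preserving, the order of
  \<open>overline P\<close> pulled back along the maps is the given order on each level, so the
  identity is an isomorphism from \<open>overline P\<close> to \<open>P\<close>. Conversely, an isomorphism
  from \<open>overline P\<close> to any \<open>Q\<close> is levelwise an order automorphism of a finite chain,
  hence the identity, which forces \<open>Q = P\<close>; thus \<open>pi(P) = P\<close>.\<close>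

lemma vmap_in_cod_size:
  assumes "simple_string_diagram k D" "j < k" "x \<in> {1..level_size D j}"
  shows "vmap D j x \<in> {1..cod_size D j}"
proof -
  have "D ! j ! (x - 1) \<in> set (D ! j)"
    using assms(3) by (auto simp: level_size_def)
  moreover have "set (D ! j) \<subseteq> {1..cod_size D j}"
    using assms(1,2) by (simp add: simple_string_diagram_def)
  ultimately show ?thesis unfolding vmap_def by blast
qed

lemma vmap_in_level_size:
  assumes "simple_string_diagram k D" "Suc j < k" "x \<in> {1..level_size D (Suc j)}"
  shows "vmap D (Suc j) x \<in> {1..level_size D j}"
  using vmap_in_cod_size[OF assms] by (simp add: cod_size_def level_size_def)

lemma vmap_mono:
  assumes "pasting_diagram k P" "j < k" "x \<in> {1..level_size P j}" "y \<in> {1..level_size P j}" "x \<le> y"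
  shows "vmap P j x \<le> vmap P j y"
proof -
  have "sorted (P ! j)" using assms(1,2) by (simp add: pasting_diagram_def)
  then show ?thesis
    using assms(3-5) unfolding vmap_def level_size_def by (intro sorted_nth_mono) auto
qed

lemma ovl_le_pasting_diagram:
  assumes "pasting_diagram k P" "j < k" "x \<in> {1..level_size P j}" "y \<in> {1..level_size P j}"
  shows "ovl_le P j x y \<longleftrightarrow> x \<le> y"
  using assms(2-4)
proof (induction j arbitrary: x y)
  case 0
  then show ?case by simp
next
  case (Suc j)
  have simple: "simple_string_diagram k P"
    using assms(1) by (simp add: pasting_diagram_def)
  let ?v = "vmap P (Suc j)"
  have "ovl_le P j (?v x) (?v y) \<longleftrightarrow> ?v x \<le> ?v y"
    using Suc.prems by (intro Suc.IH vmap_in_level_size[OF simple]) auto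
  moreover have "x \<le> y \<Longrightarrow> ?v x \<le> ?v y" "y \<le> x \<Longrightarrow> ?v y \<le> ?v x"
    using vmap_mono[OF assms(1) Suc.prems(1)] Suc.prems(2,3) by auto
  ultimately show ?case by (cases "x \<le> y") auto
qed

text \<open>The image of the down-set of \<open>x\<close> is the down-set of \<open>f x\<close>; comparing cardinalities
  gives \<open>f x = x\<close>.\<close>
lemma order_iso_atLeastAtMost_fixes:
  fixes f :: "nat \<Rightarrow> nat"
  assumes bij: "bij_betw f {1..n} {1..n}"
    and iso: "\<And>x y. x \<in> {1..n} \<Longrightarrow> y \<in> {1..n} \<Longrightarrow> x \<le> y \<longleftrightarrow> f x \<le> f y"
    and x: "x \<in> {1..n}"
  shows "f x = x"
proof -
  have image: "f ` {1..n} = {1..n}" and "inj_on f {1..n}"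
    using bij by (auto simp: bij_betw_def)
  have downset: "f ` {1..x} = {1..f x}"
  proof
    show "f ` {1..x} \<subseteq> {1..f x}"
    proof
      fix z assume "z \<in> f ` {1..x}"
      then obtain y where "y \<in> {1..x}" "z = f y" by blast
      moreover have "y \<in> {1..n}" "f y \<in> {1..n}" using calculation(1) x image by auto
      ultimately show "z \<in> {1..f x}" using iso[OF _ x] by auto
    qed
    show "{1..f x} \<subseteq> f ` {1..x}"
    proof
      fix z assume z: "z \<in> {1..f x}"
      moreover have "f x \<le> n" using image x by auto
      ultimately have "z \<in> f ` {1..n}" using image by simp
      then obtain y where "y \<in> {1..n}" "z = f y" by blast
      then show "z \<in> f ` {1..x}"
        using z iso[OF _ x] by auto
    qed
  qed
  have "inj_on f {1..x}"
    using \<open>inj_on f {1..n}\<close> by (rule inj_on_subset) (use x in auto)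
  then have "card {1..x} = card {1..f x}"
    using downset card_image by metis
  then show ?thesis by simp
qed

lemma ovl_iso_id_pasting_diagram:
  assumes "pasting_diagram (length P) P"
  shows "ovl_iso P P (\<lambda>j x. x)"
  using ovl_le_pasting_diagram[OF assms] by (auto simp: ovl_iso_def bij_betw_def)

lemma ovl_iso_pasting_diagram_is_id:
  assumes "pasting_diagram (length P) P" "ovl_iso P Q g" "j < length P" "x \<in> {1..level_size P j}"
  shows "g j x = x"
proof (rule order_iso_atLeastAtMost_fixes[OF _ _ assms(4)])
  show "bij_betw (g j) {1..level_size P j} {1..level_size P j}"
    using assms(2,3) unfolding ovl_iso_def by metis
  show "x \<le> y \<longleftrightarrow> g j x \<le> g j y"
    if "x \<in> {1..level_size P j}" "y \<in> {1..level_size P j}" for x y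
    using assms(2,3) that ovl_le_pasting_diagram[OF assms(1,3) that]
    by (auto simp: ovl_iso_def)
qed

lemma ovl_iso_pasting_diagram_eq:
  assumes P: "pasting_diagram (length P) P" and g: "ovl_iso P Q g"
  shows "Q = P"
proof (rule nth_equalityI)
  show len: "length Q = length P"
    using g by (simp add: ovl_iso_def)
  fix j assume "j < length Q"
  then have j: "j < length P" using len by simp
  have simple: "simple_string_diagram (length P) P"
    using P by (simp add: pasting_diagram_def)
  have "vmap Q j x = vmap P j x" if x: "x \<in> {1..level_size P j}" for x
  proof -
    have "vmap Q j (g j x) = (if j = 0 then vmap P j x else g (j - 1) (vmap P j x))"
      using g j x by (simp add: ovl_iso_def)
    moreover have "g j x = x"
      using ovl_iso_pasting_diagram_is_id[OF P g j x] .
    moreover have "g (j - 1) (vmap P j x) = vmap P j x" if "j \<noteq> 0"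
    proof -
      obtain i where i: "j = Suc i" using \<open>j \<noteq> 0\<close> not0_implies_Suc by blast
      have "vmap P j x \<in> {1..level_size P i}"
        using vmap_in_level_size[OF simple] j x unfolding i by blast
      then show ?thesis
        using ovl_iso_pasting_diagram_is_id[OF P g] j unfolding i by simp
    qed
    ultimately show ?thesis by auto
  qed
  note vmap_eq = this
  show "Q ! j = P ! j"
  proof (rule nth_equalityI)
    show "length (Q ! j) = length (P ! j)"
      using g j by (simp add: ovl_iso_def level_size_def)
    show "Q ! j ! i = P ! j ! i" if "i < length (Q ! j)" for i
      using vmap_eq[of "Suc i"] that \<open>length (Q ! j) = length (P ! j)\<close>
      by (simp add: vmap_def level_size_def)
  qed
qed

lemma pi_sd_pasting_diagram:
  assumes "pasting_diagram (length P) P"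
  shows "pi_sd P = P"
  unfolding pi_sd_def
proof (rule the_equality)
  show "pasting_diagram (length P) P \<and> (\<exists>f. ovl_iso P P f)"
    using assms ovl_iso_id_pasting_diagram by blast
  show "Q = P" if "pasting_diagram (length P) Q \<and> (\<exists>f. ovl_iso P Q f)" for Q
    using that ovl_iso_pasting_diagram_eq[OF assms] by blast
qed

theorem mainTheorem3:
  fixes n k :: nat and P :: "nat list list"
  assumes "k \<le> n" and "pasting_diagram k P"
  shows "\<exists>D. simple_string_diagram k D \<and> pi_sd D = P"
proof (intro exI conjI)
  have "length P = k"
    using assms(2) by (simp add: pasting_diagram_def simple_string_diagram_def)
  then show "pi_sd P = P"
    using assms(2) pi_sd_pasting_diagram by blast
  show "simple_string_diagram k P"
    using assms(2) by (simp add: pasting_diagram_def)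
qed

end
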